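(* The function $\lambda\mapsto\Pi(\lambda)b(\lambda)$, where $\Pi(\lambda)=\prod_{\beta\in\Sigma_*^+}\lambda_\beta$, is holomorphic on the tube domain $$T_\Pi=\{\lambda\in\mathfrak a^*_{\mathbb C}:|\Re\lambda_\beta|<1/2\ \text{for all }\beta\in\Sigma_*^+\}.$$
   Context: Setting. $\mathfrak a$ is an $l$-dimensional real Euclidean space with inner product extended $\mathbb C$-bilinearly. $\Sigma\subset\mathfrak a^*$ is a (possibly non-reduced) root system with Weyl group $W$. $m:\Sigma\to\,]0,\infty[$ is $W$-invariant, $m_\alpha=m(\alpha)$, and $m_\alpha=0$ for $\alpha\notin\Sigma$. Fix positive roots $\Sigma^+$ with simple roots $\alpha_1,\dots,\alpha_l$, and let $\Sigma_*^+=\{\beta\in\Sigma^+:2\beta\notin\Sigma\}$. Set $\lambda_\alpha=\langle\lambda,\alpha\rangle/\langle\alpha,\alpha\rangle$ and $\rho=\frac12\sum_{\alpha\in\Sigma^+}m_\alpha\alpha$. Let $\beta_j=\alpha_j$ if $2\alpha_j\notin\Sigma$ and $\beta_j=2\alpha_j$ otherwise. Set $\lambda_j=\lambda_{\beta_j}$ and $\rho_j=\frac12(m_{\beta_j}+m_{\beta_j/2}/2)$. $c$-functions. For $\alpha\in\Sigma^+$, $$c_\alpha(\lambda)=\frac{\Gamma(\lambda_\alpha+m_{\alpha/2}/4)}{\Gamma(\lambda_\alpha+m_{\alpha/2}/4+m_\alpha/2)},\qquad c^*_\alpha(\lambda)=\frac{\Gamma(1-\lambda_\alpha-m_{\alpha/2}/4-m_\alpha/2)}{\Gamma(1-\lambda_\alpha-m_{\alpha/2}/4)}.$$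 Set $c=\prod c_\alpha/\prod c_\alpha(\rho)$ and $c^*=\prod c^*_\alpha/\prod c^*_\alpha(-\rho)$. Then $$b(\lambda)=2^{-l}\frac{c(-\lambda)}{c^*(-\lambda)}\prod_{j=1}^l\frac1{\sin(\pi(\lambda_j-\rho_j))}.$$ *)

theory Defs
  imports "HOL-Analysis.Analysis"
begin

text \<open>The real Euclidean space a* (identified with a via the inner product) is modelled as
  real^'n with the standard inner product; l = CARD('n). Its complexification is complex^'n,
  with the inner product extended C-bilinearly.\<close>

definition refl_root :: "real^'n \<Rightarrow> real^'n \<Rightarrow> real^'n" where
  "refl_root a x = x - (2 * (x \<bullet> a) / (a \<bullet> a)) *\<^sub>R a"

definition root_system :: "(real^'n) set \<Rightarrow> bool" where
  "root_system R \<longleftrightarrow> finite R \<and> 0 \<notin> R \<and> span R = UNIV \<and>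
     (\<forall>a\<in>R. \<forall>b\<in>R. refl_root a b \<in> R) \<and>
     (\<forall>a\<in>R. \<forall>b\<in>R. 2 * (a \<bullet> b) / (a \<bullet> a) \<in> \<int>)"

inductive_set weyl_group :: "(real^'n) set \<Rightarrow> (real^'n \<Rightarrow> real^'n) set" for R where
  weyl_id: "id \<in> weyl_group R"
| weyl_step: "a \<in> R \<Longrightarrow> w \<in> weyl_group R \<Longrightarrow> refl_root a \<circ> w \<in> weyl_group R"

definition is_base :: "(real^'n) set \<Rightarrow> (real^'n) set \<Rightarrow> bool" where
  "is_base R S \<longleftrightarrow> S \<subseteq> R \<and> independent S \<and>
     (\<forall>a\<in>R. \<exists>c. (\<forall>s\<in>S. c s \<in> \<int>) \<and> ((\<forall>s\<in>S. c s \<ge> 0) \<or> (\<forall>s\<in>S. c s \<le> 0)) \<and>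
        a = (\<Sum>s\<in>S. c s *\<^sub>R s))"

definition pos_roots :: "(real^'n) set \<Rightarrow> (real^'n) set \<Rightarrow> (real^'n) set" where
  "pos_roots R S = {a\<in>R. \<exists>c. (\<forall>s\<in>S. c s \<ge> 0) \<and> a = (\<Sum>s\<in>S. c s *\<^sub>R s)}"

definition pos_roots_star :: "(real^'n) set \<Rightarrow> (real^'n) set \<Rightarrow> (real^'n) set" where
  "pos_roots_star R S = {b \<in> pos_roots R S. 2 *\<^sub>R b \<notin> R}"

definition cpair :: "complex^'n \<Rightarrow> real^'n \<Rightarrow> complex" where
  "cpair z a = (\<Sum>i\<in>UNIV. z $ i * complex_of_real (a $ i))"

definition lam_coord :: "complex^'n \<Rightarrow> real^'n \<Rightarrow> complex" where
  "lam_coord z a = cpair z a / complex_of_real (a \<bullet> a)"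

definition cvec :: "real^'n \<Rightarrow> complex^'n" where
  "cvec x = (\<chi> i. complex_of_real (x $ i))"

definition rho :: "(real^'n) set \<Rightarrow> (real^'n \<Rightarrow> real) \<Rightarrow> (real^'n) set \<Rightarrow> real^'n" where
  "rho R m S = (1/2) *\<^sub>R (\<Sum>a\<in>pos_roots R S. m a *\<^sub>R a)"

text \<open>m_{alpha/2}, written with the convention m = 0 off Sigma.\<close>
definition mhalf :: "(real^'n \<Rightarrow> real) \<Rightarrow> real^'n \<Rightarrow> real" where
  "mhalf m a = m ((1/2) *\<^sub>R a)"

definition c_alpha :: "(real^'n \<Rightarrow> real) \<Rightarrow> real^'n \<Rightarrow> complex^'n \<Rightarrow> complex" where
  "c_alpha m a z = Gamma (lam_coord z a + of_real (mhalf m a / 4)) /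
                   Gamma (lam_coord z a + of_real (mhalf m a / 4) + of_real (m a / 2))"

definition cstar_alpha :: "(real^'n \<Rightarrow> real) \<Rightarrow> real^'n \<Rightarrow> complex^'n \<Rightarrow> complex" where
  "cstar_alpha m a z = Gamma (1 - lam_coord z a - of_real (mhalf m a / 4) - of_real (m a / 2)) /
                       Gamma (1 - lam_coord z a - of_real (mhalf m a / 4))"

definition c_fun :: "(real^'n) set \<Rightarrow> (real^'n \<Rightarrow> real) \<Rightarrow> (real^'n) set \<Rightarrow> complex^'n \<Rightarrow> complex" where
  "c_fun R m S z = (\<Prod>a\<in>pos_roots R S. c_alpha m a z) /
                   (\<Prod>a\<in>pos_roots R S. c_alpha m a (cvec (rho R m S)))"

definition cstar_fun :: "(real^'n) set \<Rightarrow> (real^'n \<Rightarrow> real) \<Rightarrow> (real^'n) set \<Rightarrow> complex^'n \<Rightarrow> complex" where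
  "cstar_fun R m S z = (\<Prod>a\<in>pos_roots R S. cstar_alpha m a z) /
                       (\<Prod>a\<in>pos_roots R S. cstar_alpha m a (- cvec (rho R m S)))"

definition beta_of :: "(real^'n) set \<Rightarrow> real^'n \<Rightarrow> real^'n" where
  "beta_of R a = (if 2 *\<^sub>R a \<in> R then 2 *\<^sub>R a else a)"

definition rho_j :: "(real^'n) set \<Rightarrow> (real^'n \<Rightarrow> real) \<Rightarrow> real^'n \<Rightarrow> real" where
  "rho_j R m a = (m (beta_of R a) + mhalf m (beta_of R a) / 2) / 2"

definition sin_arg :: "(real^'n) set \<Rightarrow> (real^'n \<Rightarrow> real) \<Rightarrow> real^'n \<Rightarrow> complex^'n \<Rightarrow> complex" where
  "sin_arg R m a z = of_real pi * (lam_coord z (beta_of R a) - of_real (rho_j R m a))"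

definition b_fun :: "(real^'n) set \<Rightarrow> (real^'n \<Rightarrow> real) \<Rightarrow> (real^'n) set \<Rightarrow> complex^'n \<Rightarrow> complex" where
  "b_fun R m S z = inverse (2 ^ CARD('n)) * (c_fun R m S (- z) / cstar_fun R m S (- z)) *
                   (\<Prod>a\<in>S. 1 / sin (sin_arg R m a z))"

definition Pi_fun :: "(real^'n) set \<Rightarrow> (real^'n) set \<Rightarrow> complex^'n \<Rightarrow> complex" where
  "Pi_fun R S z = (\<Prod>b\<in>pos_roots_star R S. lam_coord z b)"

definition tube :: "(real^'n) set \<Rightarrow> (real^'n) set \<Rightarrow> (complex^'n) set" where
  "tube R S = {z. \<forall>b\<in>pos_roots_star R S. \<bar>Re (lam_coord z b)\<bar> < 1/2}"

text \<open>Points where the defining formula of b makes sense: no Gamma function in the formula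
  (evaluated at -z) is at a pole and no sine in a denominator vanishes.\<close>
definition b_regular :: "(real^'n) set \<Rightarrow> (real^'n \<Rightarrow> real) \<Rightarrow> (real^'n) set \<Rightarrow> complex^'n \<Rightarrow> bool" where
  "b_regular R m S z \<longleftrightarrow>
     (\<forall>a\<in>pos_roots R S.
        lam_coord (- z) a + of_real (mhalf m a / 4) \<notin> \<int>\<^sub>\<le>\<^sub>0 \<and>
        lam_coord (- z) a + of_real (mhalf m a / 4) + of_real (m a / 2) \<notin> \<int>\<^sub>\<le>\<^sub>0 \<and>
        1 - lam_coord (- z) a - of_real (mhalf m a / 4) - of_real (m a / 2) \<notin> \<int>\<^sub>\<le>\<^sub>0 \<and>
        1 - lam_coord (- z) a - of_real (mhalf m a / 4) \<notin> \<int>\<^sub>\<le>\<^sub>0) \<and>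
     (\<forall>a\<in>S. sin (sin_arg R m a z) \<noteq> 0)"

definition holo_several :: "(complex^'n \<Rightarrow> complex) \<Rightarrow> (complex^'n) set \<Rightarrow> bool" where
  "holo_several f U \<longleftrightarrow> (\<forall>z\<in>U. \<exists>f'. (f has_derivative f') (at z) \<and>
                                   (\<forall>c v. f' (c *s v) = c * f' v))"

end

theory Submission
  imports Defs
begin

(* Pi(lambda) b(lambda) is written as an explicit expression F that is
   visibly holomorphic on the tube T_Pi, and which agrees with Pi b wherever the defining formula
   of b makes sense.
   (1) Gamma reflection turns each quotient c_alpha(-lambda)/c*_alpha(-lambda) into a quotient
       of sines  sin(pi(lambda_alpha - m_{alpha/2}/4 - m_alpha/2)) / sin(pi(lambda_alpha - m_{alpha/2}/4)).
   (2) Every positive root is either in Sigma_*^+ or half of a root in Sigma_*^+, so the product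
       over Sigma^+ regroups into a product over beta in Sigma_*^+.
   (3) For each beta in Sigma_*^+ the factor lambda_beta times its (one or two) sine quotients
       equals  sin(pi(lambda_beta - rho_beta))  times a cofactor built from Gamma(1 +- lambda_beta)
       (resp. Gamma(1 +- 2 lambda_beta)), which is holomorphic for |Re lambda_beta| < 1/2.
   (4) The simple roots give distinct beta_j in Sigma_*^+, so the sines sin(pi(lambda_j - rho_j))
       cancel the denominator of b. *)

section \<open>Holomorphic functions of several complex variables\<close>

definition hol_at :: "(complex^'n \<Rightarrow> complex) \<Rightarrow> complex^'n \<Rightarrow> bool" where
  "hol_at f z \<longleftrightarrow> (\<exists>f'. (f has_derivative f') (at z) \<and> (\<forall>c v. f' (c *s v) = c * f' v))"

lemma holo_several_iff_hol_at: "holo_several f U \<longleftrightarrow> (\<forall>z\<in>U. hol_at f z)"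
  unfolding holo_several_def hol_at_def ..

lemma hol_at_const: "hol_at (\<lambda>x. k) z"
  unfolding hol_at_def by (intro exI[of _ "\<lambda>_. 0"]) auto

lemma hol_at_mult:
  assumes "hol_at f z" "hol_at g z"
  shows "hol_at (\<lambda>x. f x * g x) z"
proof -
  obtain f' where f: "(f has_derivative f') (at z)" "\<forall>c v. f' (c *s v) = c * f' v"
    using assms(1) unfolding hol_at_def by blast
  obtain g' where g: "(g has_derivative g') (at z)" "\<forall>c v. g' (c *s v) = c * g' v"
    using assms(2) unfolding hol_at_def by blast
  have "((\<lambda>x. f x * g x) has_derivative (\<lambda>h. f z * g' h + f' h * g z)) (at z)"
    by (rule has_derivative_mult[OF f(1) g(1)])
  moreover have "\<forall>c v. f z * g' (c *s v) + f' (c *s v) * g z = c * (f z * g' v + f' v * g z)"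
    using f(2) g(2) by (simp add: algebra_simps)
  ultimately show ?thesis unfolding hol_at_def by blast
qed

lemma hol_at_prod:
  "finite A \<Longrightarrow> (\<And>i. i \<in> A \<Longrightarrow> hol_at (f i) z) \<Longrightarrow> hol_at (\<lambda>x. \<Prod>i\<in>A. f i x) z"
  by (induction A rule: finite_induct) (auto intro: hol_at_mult hol_at_const)

lemma hol_at_compose:
  assumes "hol_at L z" "g field_differentiable at (L z)"
  shows "hol_at (\<lambda>x. g (L x)) z"
proof -
  obtain L' where L: "(L has_derivative L') (at z)" "\<forall>c v. L' (c *s v) = c * L' v"
    using assms(1) unfolding hol_at_def by blast
  obtain D where "(g has_derivative (*) D) (at (L z))"
    using assms(2) unfolding field_differentiable_def has_field_derivative_def by blast
  from diff_chain_at[OF L(1) this]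
  have "((\<lambda>x. g (L x)) has_derivative (\<lambda>v. D * L' v)) (at z)" by (simp add: o_def)
  moreover have "\<forall>c v. D * L' (c *s v) = c * (D * L' v)"
    using L(2) by (simp add: algebra_simps)
  ultimately show ?thesis unfolding hol_at_def by blast
qed

section \<open>The coordinates lambda_alpha\<close>

lemma cpair_linear:
  "cpair (c *s v) a = c * cpair v a" "cpair (v + w) a = cpair v a + cpair w a"
  "cpair (r *\<^sub>R v) a = r *\<^sub>R cpair v a" "cpair (- v) a = - cpair v a"
  by (auto simp: cpair_def sum_distrib_left algebra_simps sum.distrib scaleR_sum_right sum_negf)

lemma lam_coord_uminus: "lam_coord (- z) a = - lam_coord z a"
  by (simp add: lam_coord_def cpair_linear)

lemma lam_coord_scale:
  assumes "k \<noteq> 0"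
  shows "lam_coord z (k *\<^sub>R a) = lam_coord z a / of_real k"
proof -
  have "cpair z (k *\<^sub>R a) = of_real k * cpair z a"
    by (simp add: cpair_def sum_distrib_left algebra_simps)
  then show ?thesis
    using assms by (cases "a \<bullet> a = 0") (simp_all add: lam_coord_def field_simps power2_eq_square)
qed

text \<open>lambda is C-linear in lambda, hence holomorphic, and so is any holomorphic function of it.\<close>
lemma hol_at_lam_coord:
  fixes b :: "real^'n"
  shows "hol_at (\<lambda>x. lam_coord x b) z"
proof -
  have "linear (\<lambda>x. lam_coord x b)"
  proof (rule linearI)
    fix x y :: "complex^'n" and r :: real
    show "lam_coord (x + y) b = lam_coord x b + lam_coord y b"
      by (simp add: lam_coord_def cpair_linear add_divide_distrib)
    show "lam_coord (r *\<^sub>R x) b = r *\<^sub>R lam_coord x b"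
      unfolding lam_coord_def cpair_linear(3) by (simp add: scaleR_conv_of_real)
  qed
  then have "((\<lambda>x. lam_coord x b) has_derivative (\<lambda>x. lam_coord x b)) (at z)"
    by (simp add: bounded_linear_imp_has_derivative linear_conv_bounded_linear)
  then show ?thesis unfolding hol_at_def by (auto simp: lam_coord_def cpair_linear)
qed

lemma hol_at_holomorphic_of_lam_coord:
  assumes "g holomorphic_on U" "open U" "lam_coord z b \<in> U"
  shows "hol_at (\<lambda>x. g (lam_coord x b)) z"
  using hol_at_compose[OF hol_at_lam_coord] holomorphic_on_imp_differentiable_at[OF assms] .

section \<open>Gamma and sine identities\<close>

lemma sin_pi_eq_0_iff:
  fixes u :: complex
  shows "sin (of_real pi * u) = 0 \<longleftrightarrow> u \<in> \<int>"
  by (auto simp: sin_eq_0 Ints_def field_simps)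

lemma not_Int_if_nonpos_Ints:
  fixes u :: complex
  assumes "u \<notin> \<int>\<^sub>\<le>\<^sub>0" "1 - u \<notin> \<int>\<^sub>\<le>\<^sub>0"
  shows "u \<notin> \<int>"
proof
  assume "u \<in> \<int>"
  then obtain n where n: "u = of_int n" by (auto elim: Ints_cases)
  show False
  proof (cases "n \<le> 0")
    case True then show False using assms(1) n by (auto simp: nonpos_Ints_def)
  next
    case False
    then have "1 - u = of_int (1 - n)" "1 - n \<le> 0" using n by simp_all
    then show False using assms(2) unfolding nonpos_Ints_def by blast
  qed
qed

text \<open>The quotient c_alpha/c*_alpha at a regular point, via the reflection formula.\<close>
lemma Gamma_quotient_reflection:
  fixes u M :: complex
  assumes "u \<notin> \<int>\<^sub>\<le>\<^sub>0" "u + M \<notin> \<int>\<^sub>\<le>\<^sub>0" "1 - (u + M) \<notin> \<int>\<^sub>\<le>\<^sub>0" "1 - u \<notin> \<int>\<^sub>\<le>\<^sub>0"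
  shows "(Gamma u / Gamma (u + M)) / (Gamma (1 - (u + M)) / Gamma (1 - u)) =
           sin (of_real pi * (u + M)) / sin (of_real pi * u)"
    and "sin (of_real pi * u) \<noteq> 0"
proof -
  show su: "sin (of_real pi * u) \<noteq> 0"
    using not_Int_if_nonpos_Ints[OF assms(1,4)] sin_pi_eq_0_iff by blast
  have sv: "sin (of_real pi * (u + M)) \<noteq> 0"
    using not_Int_if_nonpos_Ints[OF assms(2,3)] sin_pi_eq_0_iff by blast
  have "Gamma (u + M) \<noteq> 0" "Gamma (1 - u) \<noteq> 0"
    using assms Gamma_nonzero by auto
  then have "(Gamma u / Gamma (u + M)) / (Gamma (1 - (u + M)) / Gamma (1 - u)) =
             (Gamma u * Gamma (1 - u)) / (Gamma (u + M) * Gamma (1 - (u + M)))"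
    by (simp add: field_simps)
  also have "\<dots> = (of_real pi / sin (of_real pi * u)) / (of_real pi / sin (of_real pi * (u + M)))"
    by (simp only: Gamma_reflection_complex)
  also have "\<dots> = sin (of_real pi * (u + M)) / sin (of_real pi * u)"
    using su sv by (simp add: field_simps)
  finally show "(Gamma u / Gamma (u + M)) / (Gamma (1 - (u + M)) / Gamma (1 - u)) =
                sin (of_real pi * (u + M)) / sin (of_real pi * u)" .
qed

text \<open>w / sin(pi w) extends holomorphically across w = 0: it equals Gamma(1+w)Gamma(1-w)/pi.\<close>
lemma Gamma_one_plus_minus:
  fixes w :: complex
  assumes "w \<notin> \<int>\<^sub>\<le>\<^sub>0"
  shows "Gamma (1 + w) * Gamma (1 - w) / of_real pi = w / sin (of_real pi * w)"
proof -
  have "Gamma (1 + w) = w * Gamma w" using Gamma_plus1[OF assms] by (simp add: add.commute)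
  then have "Gamma (1 + w) * Gamma (1 - w) / of_real pi = w * (Gamma w * Gamma (1 - w)) / of_real pi"
    by simp
  then show ?thesis by (simp add: Gamma_reflection_complex)
qed

lemma divide_sin_pi:
  fixes w :: complex
  assumes "sin (of_real pi * w) \<noteq> 0"
  shows "w / sin (of_real pi * w) = Gamma (1 + w) * Gamma (1 - w) / of_real pi"
  using assms Gamma_one_plus_minus nonpos_Ints_subset_Ints sin_pi_eq_0_iff by (metis subsetD)

text \<open>The combined factor of a root beta and of beta/2 (non-reduced case), via sin(2x) = 2 sin x cos x.\<close>
lemma doubled_root_sine_identity:
  fixes w c \<mu> :: complex
  assumes "sin (of_real pi * (w - c)) \<noteq> 0" "sin (of_real pi * (2 * w)) \<noteq> 0"
  shows "w * ((sin (of_real pi * (w - c - \<mu>)) / sin (of_real pi * (w - c))) *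
              (sin (of_real pi * (2 * w - 2 * c)) / sin (of_real pi * (2 * w)))) =
         sin (of_real pi * (w - (c + \<mu>))) *
           (cos (of_real pi * (w - c)) * (Gamma (1 + 2 * w) * Gamma (1 - 2 * w) / of_real pi))"
proof -
  have "sin (of_real pi * (2 * w - 2 * c)) = 2 * sin (of_real pi * (w - c)) * cos (of_real pi * (w - c))"
    using sin_double[of "of_real pi * (w - c)"] by (simp add: algebra_simps)
  moreover have "Gamma (1 + 2 * w) * Gamma (1 - 2 * w) / of_real pi = 2 * w / sin (of_real pi * (2 * w))"
    using divide_sin_pi[OF assms(2)] by simp
  ultimately show ?thesis using assms by (simp add: field_simps)
qed

section \<open>Root-system combinatorics\<close>

lemma half_not_Int: "(1/2::real) \<notin> \<int>"
proof
  assume "(1/2::real) \<in> \<int>"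
  then obtain n where "(1/2::real) = of_int n" by (auto elim: Ints_cases)
  then have "(1::real) = 2 * of_int n" by simp
  then have "(1::int) = 2 * n" by (metis of_int_1 of_int_eq_iff of_int_mult of_int_numeral)
  then show False by presburger
qed

text \<open>In a root system 4 alpha is never a root (its Cartan integer with alpha would be 1/2).\<close>
lemma root_system_no_quadruple:
  assumes "root_system R" "a \<in> R"
  shows "4 *\<^sub>R a \<notin> R"
proof
  assume h: "4 *\<^sub>R a \<in> R"
  have "a \<bullet> a \<noteq> 0" using assms unfolding root_system_def by auto
  have "2 * ((4 *\<^sub>R a) \<bullet> a) / ((4 *\<^sub>R a) \<bullet> (4 *\<^sub>R a)) \<in> \<int>"
    using assms h unfolding root_system_def by blast
  moreover have "2 * ((4 *\<^sub>R a) \<bullet> a) / ((4 *\<^sub>R a) \<bullet> (4 *\<^sub>R a)) = 2 * (4 * (a \<bullet> a)) / (16 * (a \<bullet> a))"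
    by simp
  moreover have "2 * (4 * (a \<bullet> a)) / (16 * (a \<bullet> a)) = (1/2::real)"
    using \<open>a \<bullet> a \<noteq> 0\<close> by simp
  ultimately show False using half_not_Int by metis
qed

lemma pos_roots_subset: "pos_roots R S \<subseteq> R" "pos_roots_star R S \<subseteq> pos_roots R S"
  unfolding pos_roots_def pos_roots_star_def by auto

lemma pos_roots_scale:
  assumes "b \<in> pos_roots R S" "k > 0" "k *\<^sub>R b \<in> R"
  shows "k *\<^sub>R b \<in> pos_roots R S"
proof -
  obtain c where c: "\<forall>s\<in>S. c s \<ge> 0" "b = (\<Sum>s\<in>S. c s *\<^sub>R s)"
    using assms(1) unfolding pos_roots_def by blast
  have "k *\<^sub>R b = (\<Sum>s\<in>S. (k * c s) *\<^sub>R s)"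
    unfolding c(2) scaleR_sum_right by (simp only: scaleR_scaleR)
  moreover have "\<forall>s\<in>S. k * c s \<ge> 0" using c(1) assms(2) by simp
  ultimately show ?thesis using assms(3) unfolding pos_roots_def mem_Collect_eq
    by (intro conjI exI[of _ "\<lambda>s. k * c s"]) auto
qed

lemma base_finite: "is_base R S \<Longrightarrow> finite S"
  unfolding is_base_def using independent_imp_finite by blast

lemma base_subset_pos_roots:
  assumes "is_base R S" "a \<in> S"
  shows "a \<in> pos_roots R S"
proof -
  have "(\<Sum>s\<in>S. (if s = a then 1 else 0) *\<^sub>R s) = a"
    using base_finite[OF assms(1)] assms(2) by (simp add: if_distrib[of "\<lambda>x. x *\<^sub>R _"] cong: if_cong)
  then show ?thesis using assms unfolding pos_roots_def is_base_def
    by (intro CollectI conjI) (auto intro!: exI[of _ "\<lambda>s. if s = a then 1 else 0"])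
qed

lemma beta_of_in_pos_roots_star:
  assumes "root_system R" "is_base R S" "a \<in> S"
  shows "beta_of R a \<in> pos_roots_star R S"
proof -
  have aP: "a \<in> pos_roots R S" by (rule base_subset_pos_roots[OF assms(2,3)])
  then have aR: "a \<in> R" using pos_roots_subset by blast
  show ?thesis
  proof (cases "2 *\<^sub>R a \<in> R")
    case True
    have "2 *\<^sub>R a \<in> pos_roots R S" using pos_roots_scale[OF aP _ True] by simp
    moreover have "2 *\<^sub>R (2 *\<^sub>R a) \<notin> R" using root_system_no_quadruple[OF assms(1) aR] by simp
    ultimately show ?thesis using True unfolding beta_of_def pos_roots_star_def by simp
  next
    case False
    then show ?thesis using aP unfolding beta_of_def pos_roots_star_def by simp
  qed
qed

text \<open>... and distinct simple roots give distinct beta_j, since a base never contains both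
  alpha and 2 alpha.\<close>
lemma inj_on_beta_of:
  assumes "root_system R" "is_base R S"
  shows "inj_on (beta_of R) S"
proof
  have no_double: False if "x \<in> S" "2 *\<^sub>R x \<in> S" for x
  proof -
    have "x \<noteq> 0" using that assms unfolding is_base_def root_system_def by auto
    have "x \<noteq> 2 *\<^sub>R x"
    proof
      assume "x = 2 *\<^sub>R x"
      then have "x = x + x" by (simp add: scaleR_2)
      then show False using \<open>x \<noteq> 0\<close> by simp
    qed
    then have "2 *\<^sub>R x \<in> span (S - {2 *\<^sub>R x})" using that by (simp add: span_base span_mul)
    then show False using assms(2) that(2) unfolding is_base_def dependent_def by blast
  qed
  fix a b assume ab: "a \<in> S" "b \<in> S" "beta_of R a = beta_of R b"
  show "a = b"
  proof (cases "2 *\<^sub>R a \<in> R"; cases "2 *\<^sub>R b \<in> R")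
    assume "2 *\<^sub>R a \<in> R" "2 *\<^sub>R b \<notin> R"
    then have "b = 2 *\<^sub>R a" using ab(3) unfolding beta_of_def by simp
    then show ?thesis using no_double ab(1,2) by blast
  next
    assume "2 *\<^sub>R a \<notin> R" "2 *\<^sub>R b \<in> R"
    then have "a = 2 *\<^sub>R b" using ab(3) unfolding beta_of_def by simp
    then show ?thesis using no_double ab(1,2) by blast
  qed (use ab(3) in \<open>simp_all add: beta_of_def\<close>)
qed

lemma prod_pos_roots_star_split:
  assumes "root_system R" "is_base R S"
  shows "(\<Prod>b\<in>pos_roots_star R S. g b) =
         (\<Prod>b\<in>pos_roots_star R S - beta_of R ` S. g b) * (\<Prod>a\<in>S. g (beta_of R a))"
proof -
  have "beta_of R ` S \<subseteq> pos_roots_star R S"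
    using beta_of_in_pos_roots_star[OF assms] by auto
  moreover have "finite (pos_roots_star R S)"
    using assms(1) pos_roots_subset finite_subset unfolding root_system_def by metis
  ultimately have "(\<Prod>b\<in>pos_roots_star R S. g b) =
      (\<Prod>b\<in>pos_roots_star R S - beta_of R ` S. g b) * (\<Prod>b\<in>beta_of R ` S. g b)"
    by (rule prod.subset_diff)
  also have "(\<Prod>b\<in>beta_of R ` S. g b) = (\<Prod>a\<in>S. g (beta_of R a))"
    using prod.reindex[OF inj_on_beta_of[OF assms]] by simp
  finally show ?thesis .
qed

lemma pos_roots_decomposition:
  assumes "root_system R"
  defines "half \<equiv> \<lambda>b::real^'n. (1/2) *\<^sub>R b"
  shows "pos_roots R S = pos_roots_star R S \<union> half ` {b\<in>pos_roots_star R S. half b \<in> R}"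
    and "pos_roots_star R S \<inter> half ` {b\<in>pos_roots_star R S. half b \<in> R} = {}"
proof -
  show "pos_roots_star R S \<inter> half ` {b\<in>pos_roots_star R S. half b \<in> R} = {}"
    unfolding half_def pos_roots_star_def using pos_roots_subset(1) by fastforce
  have "g \<in> half ` {b\<in>pos_roots_star R S. half b \<in> R}"
    if g: "g \<in> pos_roots R S" "2 *\<^sub>R g \<in> R" for g
  proof -
    have "g \<in> R" using g pos_roots_subset by blast
    then have "2 *\<^sub>R (2 *\<^sub>R g) \<notin> R" using root_system_no_quadruple[OF assms(1)] by simp
    moreover have "2 *\<^sub>R g \<in> pos_roots R S" using pos_roots_scale[OF g(1) _ g(2)] by simp
    ultimately have "2 *\<^sub>R g \<in> pos_roots_star R S" unfolding pos_roots_star_def by simp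
    moreover have "half (2 *\<^sub>R g) = g" unfolding half_def by simp
    ultimately show ?thesis using \<open>g \<in> R\<close> by (metis (mono_tags, lifting) image_eqI mem_Collect_eq)
  qed
  then have "pos_roots R S \<subseteq> pos_roots_star R S \<union> half ` {b\<in>pos_roots_star R S. half b \<in> R}"
    unfolding pos_roots_star_def by blast
  moreover have "half b \<in> pos_roots R S" if "b \<in> pos_roots_star R S" "half b \<in> R" for b
    using pos_roots_scale[of b R S "1/2"] that subsetD[OF pos_roots_subset(2)] unfolding half_def by auto
  ultimately show "pos_roots R S = pos_roots_star R S \<union> half ` {b\<in>pos_roots_star R S. half b \<in> R}"
    using pos_roots_subset(2) by blast
qed

lemma prod_pos_roots_grouped:
  fixes S :: "(real^'n) set"
  assumes "root_system R"
  shows "(\<Prod>a\<in>pos_roots R S. f a) =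
         (\<Prod>b\<in>pos_roots_star R S. f b * (if (1/2) *\<^sub>R b \<in> R then f ((1/2) *\<^sub>R b) else 1))"
proof -
  define half where "half = (\<lambda>b::real^'n. (1/2) *\<^sub>R b)"
  define T where "T = {b\<in>pos_roots_star R S. half b \<in> R}"
  have fin: "finite (pos_roots_star R S)"
    using assms pos_roots_subset finite_subset unfolding root_system_def by metis
  then have "finite T" unfolding T_def by simp
  have "inj_on half T" unfolding half_def by (rule inj_onI) simp
  have "(\<Prod>a\<in>pos_roots R S. f a) = (\<Prod>a\<in>pos_roots_star R S. f a) * (\<Prod>a\<in>half ` T. f a)"
    unfolding pos_roots_decomposition(1)[OF assms] half_def[symmetric] T_def[symmetric]
    using pos_roots_decomposition(2)[OF assms] fin \<open>finite T\<close>
    by (intro prod.union_disjoint) (auto simp: half_def T_def)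
  also have "(\<Prod>a\<in>half ` T. f a) = (\<Prod>b\<in>T. f (half b))"
    using prod.reindex[OF \<open>inj_on half T\<close>] by simp
  also have "\<dots> = (\<Prod>b\<in>pos_roots_star R S. if half b \<in> R then f (half b) else 1)"
    unfolding T_def by (rule prod.inter_filter[OF fin])
  finally show ?thesis unfolding prod.distrib half_def by simp
qed

section \<open>The holomorphic extension of Pi b\<close>

text \<open>The quotient c_alpha(-lambda)/c*_alpha(-lambda), written with sines.\<close>
definition c_quot :: "(real^'n \<Rightarrow> real) \<Rightarrow> real^'n \<Rightarrow> complex^'n \<Rightarrow> complex" where
  "c_quot m a z = sin (of_real pi * (lam_coord z a - of_real (mhalf m a / 4) - of_real (m a / 2))) /
                  sin (of_real pi * (lam_coord z a - of_real (mhalf m a / 4)))"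

text \<open>rho_beta for beta in Sigma_*^+, so that rho_j = rho_of m beta_j.\<close>
definition rho_of :: "(real^'n \<Rightarrow> real) \<Rightarrow> real^'n \<Rightarrow> real" where
  "rho_of m b = (m b + mhalf m b / 2) / 2"

text \<open>The cofactor of sin(pi(lambda_beta - rho_beta)) attached to beta in Sigma_*^+.\<close>
definition star_cofactor :: "(real^'n) set \<Rightarrow> (real^'n \<Rightarrow> real) \<Rightarrow> real^'n \<Rightarrow> complex \<Rightarrow> complex" where
  "star_cofactor R m b w = (if (1/2) *\<^sub>R b \<in> R
      then cos (of_real pi * (w - of_real (mhalf m b / 4))) * (Gamma (1 + 2 * w) * Gamma (1 - 2 * w) / of_real pi)
      else Gamma (1 + w) * Gamma (1 - w) / of_real pi)"

definition b_const :: "(real^'n) set \<Rightarrow> (real^'n \<Rightarrow> real) \<Rightarrow> (real^'n) set \<Rightarrow> complex" where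
  "b_const R m S = inverse (2 ^ CARD('n)) *
     ((\<Prod>a\<in>pos_roots R S. cstar_alpha m a (- cvec (rho R m S))) /
      (\<Prod>a\<in>pos_roots R S. c_alpha m a (cvec (rho R m S))))"

text \<open>The holomorphic extension of Pi b: the sines of the beta_j have been cancelled against the
  denominator of b.\<close>
definition Pi_b_ext :: "(real^'n) set \<Rightarrow> (real^'n \<Rightarrow> real) \<Rightarrow> (real^'n) set \<Rightarrow> complex^'n \<Rightarrow> complex" where
  "Pi_b_ext R m S z = b_const R m S *
     (\<Prod>b\<in>pos_roots_star R S. star_cofactor R m b (lam_coord z b)) *
     (\<Prod>b\<in>pos_roots_star R S - beta_of R ` S. sin (of_real pi * (lam_coord z b - of_real (rho_of m b))))"

text \<open>Gamma(1 +- w) and Gamma(1 +- 2w) have no poles for |Re w| < 1/2.\<close>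
lemma star_cofactor_holomorphic: "star_cofactor R m b holomorphic_on {w. \<bar>Re w\<bar> < 1/2}"
proof -
  have "x \<notin> \<int>\<^sub>\<le>\<^sub>0" if "Re x > 0" for x :: complex
    using that by (auto elim: nonpos_Ints_cases)
  then show ?thesis unfolding star_cofactor_def
    by (cases "(1/2) *\<^sub>R b \<in> R") (auto intro!: holomorphic_intros)
qed

text \<open>On the tube every lambda_beta, beta in Sigma_*^+, lies in that strip.\<close>
lemma Pi_b_ext_holomorphic:
  assumes "finite R" "z \<in> tube R S"
  shows "hol_at (Pi_b_ext R m S) z"
proof -
  have fin: "finite (pos_roots_star R S)"
    using assms(1) pos_roots_subset finite_subset by metis
  have "open {w::complex. \<bar>Re w\<bar> < 1/2}" by (intro open_Collect_less continuous_intros)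
  then have cof: "hol_at (\<lambda>x. star_cofactor R m b (lam_coord x b)) z" if "b \<in> pos_roots_star R S" for b
    using assms(2) that unfolding tube_def
    by (intro hol_at_holomorphic_of_lam_coord[OF star_cofactor_holomorphic]) auto
  have "(\<lambda>w. sin (of_real pi * (w - c))) holomorphic_on UNIV" for c
    by (intro holomorphic_intros)
  then have "hol_at (\<lambda>x. sin (of_real pi * (lam_coord x b - c))) z" for b c
    using hol_at_holomorphic_of_lam_coord by blast
  then show ?thesis unfolding Pi_b_ext_def
    using fin by (intro hol_at_mult hol_at_const hol_at_prod cof) auto
qed

lemma c_alpha_over_cstar_alpha:
  assumes "b_regular R m S z" "a \<in> pos_roots R S"
  shows "c_alpha m a (- z) / cstar_alpha m a (- z) = c_quot m a z"
    and "sin (of_real pi * (lam_coord z a - of_real (mhalf m a / 4))) \<noteq> 0"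
proof -
  define u where "u = - lam_coord z a + of_real (mhalf m a / 4)"
  define M :: complex where "M = of_real (m a / 2)"
  have "u \<notin> \<int>\<^sub>\<le>\<^sub>0" "u + M \<notin> \<int>\<^sub>\<le>\<^sub>0" "1 - (u + M) \<notin> \<int>\<^sub>\<le>\<^sub>0" "1 - u \<notin> \<int>\<^sub>\<le>\<^sub>0"
    using assms unfolding b_regular_def u_def M_def lam_coord_uminus by (auto simp: algebra_simps)
  note reflection = Gamma_quotient_reflection[OF this]
  have "sin (of_real pi * u) = - sin (of_real pi * (lam_coord z a - of_real (mhalf m a / 4)))"
    "sin (of_real pi * (u + M)) =
       - sin (of_real pi * (lam_coord z a - of_real (mhalf m a / 4) - of_real (m a / 2)))"
    unfolding u_def M_def by (simp_all add: sin_minus[symmetric] algebra_simps)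
  with reflection show "c_alpha m a (- z) / cstar_alpha m a (- z) = c_quot m a z"
    and "sin (of_real pi * (lam_coord z a - of_real (mhalf m a / 4))) \<noteq> 0"
    unfolding c_alpha_def cstar_alpha_def c_quot_def lam_coord_uminus u_def M_def
    by (simp_all add: algebra_simps)
qed

lemma c_quotient_product:
  assumes "b_regular R m S z"
  shows "c_fun R m S (- z) / cstar_fun R m S (- z) =
         (\<Prod>a\<in>pos_roots R S. c_quot m a z) *
         ((\<Prod>a\<in>pos_roots R S. cstar_alpha m a (- cvec (rho R m S))) /
          (\<Prod>a\<in>pos_roots R S. c_alpha m a (cvec (rho R m S))))"
proof -
  have div: "(a / b) / (c / d) = (a / c) * (d / b)" for a b c d :: complex
    by (simp add: divide_inverse mult_ac)
  have "(\<Prod>a\<in>pos_roots R S. c_alpha m a (- z)) / (\<Prod>a\<in>pos_roots R S. cstar_alpha m a (- z)) =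
        (\<Prod>a\<in>pos_roots R S. c_quot m a z)"
    unfolding prod_dividef[symmetric] using c_alpha_over_cstar_alpha(1)[OF assms] by simp
  then show ?thesis unfolding c_fun_def cstar_fun_def div by simp
qed

lemma star_root_factor:
  assumes "root_system R" "b \<in> R" "\<forall>a. a \<notin> R \<longrightarrow> m a = 0"
    and "\<forall>a\<in>{b, (1/2) *\<^sub>R b} \<inter> R. sin (of_real pi * (lam_coord z a - of_real (mhalf m a / 4))) \<noteq> 0"
  shows "lam_coord z b * (c_quot m b z * (if (1/2) *\<^sub>R b \<in> R then c_quot m ((1/2) *\<^sub>R b) z else 1)) =
         sin (of_real pi * (lam_coord z b - of_real (rho_of m b))) * star_cofactor R m b (lam_coord z b)"
proof (cases "(1/2) *\<^sub>R b \<in> R")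
  case False
  then have "mhalf m b = 0" using assms(3) unfolding mhalf_def by simp
  moreover have "sin (of_real pi * lam_coord z b) \<noteq> 0"
    using assms(2,4) \<open>mhalf m b = 0\<close> by simp
  ultimately show ?thesis using False divide_sin_pi[of "lam_coord z b"]
    unfolding c_quot_def rho_of_def star_cofactor_def by (simp add: field_simps)
next
  case True
  define g where "g = (1/2) *\<^sub>R b"
  define w where "w = lam_coord z b"
  have "(1/2) *\<^sub>R g \<notin> R"
    using root_system_no_quadruple[OF assms(1), of "(1/2) *\<^sub>R g"] assms(2) unfolding g_def by auto
  then have "mhalf m g = 0" using assms(3) unfolding mhalf_def by simp
  have mb: "mhalf m b = m g" unfolding mhalf_def g_def ..
  have lg: "lam_coord z g = 2 * w" unfolding g_def w_def using lam_coord_scale[of "1/2" z b] by simp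
  have nz: "sin (of_real pi * (w - of_real (m g / 4))) \<noteq> 0" "sin (of_real pi * (2 * w)) \<noteq> 0"
    using assms(2,4) True \<open>mhalf m g = 0\<close> lg mb unfolding g_def w_def by auto
  have qg: "c_quot m g z = sin (of_real pi * (2 * w - 2 * of_real (m g / 4))) / sin (of_real pi * (2 * w))"
    unfolding c_quot_def lg \<open>mhalf m g = 0\<close> by simp
  have qb: "c_quot m b z = sin (of_real pi * (w - of_real (m g / 4) - of_real (m b / 2))) /
                                sin (of_real pi * (w - of_real (m g / 4)))"
    unfolding c_quot_def mb w_def ..
  have "lam_coord z b * (c_quot m b z * c_quot m g z) =
      sin (of_real pi * (w - (of_real (m g / 4) + of_real (m b / 2)))) *
        (cos (of_real pi * (w - of_real (m g / 4))) * (Gamma (1 + 2 * w) * Gamma (1 - 2 * w) / of_real pi))"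
    unfolding w_def[symmetric] qg qb by (rule doubled_root_sine_identity[OF nz])
  moreover have "of_real (m g / 4) + of_real (m b / 2) = (of_real (rho_of m b) :: complex)"
    unfolding rho_of_def mb by simp
  ultimately show ?thesis
    using True unfolding star_cofactor_def mb g_def[symmetric] w_def[symmetric] by simp
qed

lemma Pi_b_ext_eq:
  assumes "root_system R" "\<forall>a. a \<notin> R \<longrightarrow> m a = 0" "is_base R S" "b_regular R m S z"
  shows "Pi_b_ext R m S z = Pi_fun R S z * b_fun R m S z"
proof -
  define sn where "sn = (\<lambda>b. sin (of_real pi * (lam_coord z b - of_real (rho_of m b))))"
  define H where "H = (\<lambda>b. star_cofactor R m b (lam_coord z b))"
  have sin_simple: "(\<Prod>a\<in>S. sn (beta_of R a)) * (\<Prod>a\<in>S. 1 / sin (sin_arg R m a z)) = 1"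
    using assms(4) unfolding b_regular_def sn_def sin_arg_def rho_j_def rho_of_def prod.distrib[symmetric]
    by (simp add: prod.neutral)
  have "Pi_fun R S z * (\<Prod>a\<in>pos_roots R S. c_quot m a z) =
        (\<Prod>b\<in>pos_roots_star R S. lam_coord z b *
           (c_quot m b z * (if (1/2) *\<^sub>R b \<in> R then c_quot m ((1/2) *\<^sub>R b) z else 1)))"
    unfolding Pi_fun_def prod_pos_roots_grouped[OF assms(1)] prod.distrib ..
  also have "\<dots> = (\<Prod>b\<in>pos_roots_star R S. sn b * H b)"
  proof (rule prod.cong[OF refl])
    fix b assume b: "b \<in> pos_roots_star R S"
    have "b \<in> pos_roots R S" "b \<in> R" using b pos_roots_subset by blast+
    then have "\<forall>a\<in>{b, (1/2) *\<^sub>R b} \<inter> R. a \<in> pos_roots R S"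
      using pos_roots_scale[of b R S "1/2"] by auto
    then have "\<forall>a\<in>{b, (1/2) *\<^sub>R b} \<inter> R. sin (of_real pi * (lam_coord z a - of_real (mhalf m a / 4))) \<noteq> 0"
      using c_alpha_over_cstar_alpha(2)[OF assms(4)] by blast
    then show "lam_coord z b * (c_quot m b z * (if (1/2) *\<^sub>R b \<in> R then c_quot m ((1/2) *\<^sub>R b) z else 1)) =
               sn b * H b"
      unfolding sn_def H_def by (rule star_root_factor[OF assms(1) \<open>b \<in> R\<close> assms(2)])
  qed
  also have "\<dots> = (\<Prod>b\<in>pos_roots_star R S - beta_of R ` S. sn b) * (\<Prod>a\<in>S. sn (beta_of R a)) *
                  (\<Prod>b\<in>pos_roots_star R S. H b)"
    unfolding prod.distrib prod_pos_roots_star_split[OF assms(1,3)] ..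
  finally have "Pi_fun R S z * b_fun R m S z =
     b_const R m S * (\<Prod>b\<in>pos_roots_star R S - beta_of R ` S. sn b) * (\<Prod>b\<in>pos_roots_star R S. H b) *
     ((\<Prod>a\<in>S. sn (beta_of R a)) * (\<Prod>a\<in>S. 1 / sin (sin_arg R m a z)))"
    unfolding b_fun_def c_quotient_product[OF assms(4)] b_const_def by (simp add: mult_ac)
  moreover have "Pi_b_ext R m S z =
     b_const R m S * (\<Prod>b\<in>pos_roots_star R S - beta_of R ` S. sn b) * (\<Prod>b\<in>pos_roots_star R S. H b)"
    unfolding Pi_b_ext_def sn_def H_def by (simp add: mult_ac)
  ultimately show ?thesis unfolding sin_simple by simp
qed

theorem mainTheorem6:
  fixes R S :: "(real^'n) set" and m :: "real^'n \<Rightarrow> real"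
  assumes "root_system R"
    and "\<forall>a\<in>R. m a > 0"
    and "\<forall>a. a \<notin> R \<longrightarrow> m a = 0"
    and "\<forall>w\<in>weyl_group R. \<forall>a\<in>R. m (w a) = m a"
    and "is_base R S"
  shows "\<exists>F. holo_several F (tube R S) \<and>
           (\<forall>z\<in>tube R S. b_regular R m S z \<longrightarrow> F z = Pi_fun R S z * b_fun R m S z)"
proof (intro exI conjI)
  have "finite R" using assms(1) unfolding root_system_def by blast
  then show "holo_several (Pi_b_ext R m S) (tube R S)"
    unfolding holo_several_iff_hol_at using Pi_b_ext_holomorphic by blast
  show "\<forall>z\<in>tube R S. b_regular R m S z \<longrightarrow> Pi_b_ext R m S z = Pi_fun R S z * b_fun R m S z"
    using Pi_b_ext_eq[OF assms(1,3,5)] by blast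
qed

end
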